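(* Let $H$ be a separable infinite-dimensional complex Hilbert space. Let $x_1,\dots,x_n,y_1,\dots,y_n\in H$ be vectors of norm $1$, let $R>1$, let $T\in L(H)$ with $\|T\|\le R$, let $x\in H\setminus\{0\}$, $z\in H$ and $\epsilon>0$. Then there exist a finite rank operator $S\in L(H)$ with $\|S\|\le R$ and a natural number $N$ depending only on $R,\epsilon,\|x\|,\|z\|$ such that $|\langle (S-T)x_j,y_j\rangle|<\epsilon$ and $\langle z-S^Nx,y_j\rangle=0$ for every $j=1,\dots,n$, and $\|S^{l+1}x\|=R\|S^lx\|$ for every integer $0\le l<N$.
   Context: $L(H)$ denotes the bounded linear operators on $H$; $\langle\cdot,\cdot\rangle$ is the inner product of $H$. *)

theory Defs
  imports "HOL-Analysis.Analysis"
begin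

class complex_vector = real_vector +
  fixes scaleC :: "complex \<Rightarrow> 'a \<Rightarrow> 'a" (infixr \<open>*\<^sub>C\<close> 75)
  assumes scaleC_add_right: "scaleC a (x + y) = scaleC a x + scaleC a y"
    and scaleC_add_left: "scaleC (a + b) x = scaleC a x + scaleC b x"
    and scaleC_scaleC: "scaleC a (scaleC b x) = scaleC (a * b) x"
    and scaleC_one: "scaleC 1 x = x"
    and scaleR_scaleC: "scaleR r x = scaleC (complex_of_real r) x"

text \<open>Complex inner product spaces: a complex vector space with a sesquilinear,
conjugate-symmetric form whose real part is the underlying real inner product
(hence it is positive definite and induces the norm).\<close>

class complex_inner = real_inner + complex_vector +
  fixes cinner :: "'a \<Rightarrow> 'a \<Rightarrow> complex"
  assumes cinner_conj: "cinner x y = cnj (cinner y x)"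
    and cinner_add_left: "cinner (x + y) z = cinner x z + cinner y z"
    and cinner_scaleC_left: "cinner (scaleC c x) y = c * cinner x y"
    and inner_Re_cinner: "inner x y = Re (cinner x y)"

definition cspan :: "'a::complex_vector set \<Rightarrow> 'a set" where
  "cspan B = {v. \<exists>A c. finite A \<and> A \<subseteq> B \<and> v = (\<Sum>a\<in>A. c a *\<^sub>C a)}"

definition clinear :: "('a::complex_vector \<Rightarrow> 'b::complex_vector) \<Rightarrow> bool" where
  "clinear f \<longleftrightarrow> (\<forall>x y. f (x + y) = f x + f y) \<and> (\<forall>c x. f (c *\<^sub>C x) = c *\<^sub>C f x)"

definition finite_rank :: "('a::complex_vector \<Rightarrow> 'b::complex_vector) \<Rightarrow> bool" where
  "finite_rank f \<longleftrightarrow> (\<exists>B. finite B \<and> range f \<subseteq> cspan B)"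

end

theory Submission
  imports Defs
begin

text \<open>Compress \<open>T\<close> to the finite-dimensional space \<open>F\<close> spanned by \<open>x\<close>, \<open>z\<close>, the \<open>x\<^sub>j\<close> and the
  \<open>y\<^sub>j\<close>: \<open>C = (1 - \<delta>) / R \<cdot> P\<^sub>F T\<close> is a strict contraction with \<open>\<langle>R C a, y\<rangle> = (1 - \<delta>) \<langle>T a, y\<rangle>\<close>
  for \<open>y \<in> F\<close>. A strict contraction has finite rank isometric dilations of any length \<open>N\<close>: if
  \<open>(u i)\<close> is orthonormal for the defect form \<open>D a b = \<langle>a, b\<rangle> - \<langle>C a, C b\<rangle>\<close>, then
  \<open>h \<mapsto> C h + \<Sum>\<^sub>i D h (u i) f (1, i)\<close> is isometric on \<open>F\<close>, and shifting fresh orthonormal vectors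
  \<open>f (l, i) \<mapsto> f (l + 1, i)\<close>, which exist in infinite dimension, keeps the first \<open>N\<close> iterates of
  \<open>x\<close> isometric. The last shift is free: sending it to a suitable unit vector makes the
  \<open>F\<close>-component of \<open>V\<^sup>N x\<close> equal to any vector close enough to \<open>C\<^sup>N x\<close>, for instance \<open>z / R\<^sup>N\<close>
  when \<open>N\<close> is large, because \<open>C\<^sup>N x \<rightarrow> 0\<close>. Then \<open>S = R V\<close> works.\<close>

section \<open>Hermitian forms and orthonormal families\<close>

declare scaleC_one [simp]

lemma scaleC_zero_right [simp]: "c *\<^sub>C (0::'a::complex_vector) = 0"
proof -
  have "c *\<^sub>C (0::'a) = c *\<^sub>C 0 + c *\<^sub>C 0" by (metis add_0 scaleC_add_right)
  then show ?thesis by simp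
qed

lemma scaleC_zero_left [simp]: "0 *\<^sub>C (x::'a::complex_vector) = 0"
proof -
  have "0 *\<^sub>C x = 0 *\<^sub>C x + 0 *\<^sub>C x" by (metis add_0 scaleC_add_left)
  then show ?thesis by simp
qed

lemma scaleC_minus_left: "(- c) *\<^sub>C (x::'a::complex_vector) = - (c *\<^sub>C x)"
  by (metis add.right_inverse add_eq_0_iff scaleC_add_left scaleC_zero_left)

lemma scaleC_diff_left: "(c - d) *\<^sub>C (x::'a::complex_vector) = c *\<^sub>C x - d *\<^sub>C x"
  by (metis diff_conv_add_uminus scaleC_add_left scaleC_minus_left)

lemma scaleC_sum_right: "c *\<^sub>C (\<Sum>i\<in>I. f i) = (\<Sum>i\<in>I. c *\<^sub>C (f i::'a::complex_vector))"
  by (induction I rule: infinite_finite_induct) (auto simp: scaleC_add_right)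

lemma scaleC_sum_left: "(\<Sum>i\<in>I. f i) *\<^sub>C (x::'a::complex_vector) = (\<Sum>i\<in>I. f i *\<^sub>C x)"
  by (induction I rule: infinite_finite_induct) (auto simp: scaleC_add_left)

lemma scaleR_scaleC_commute: "r *\<^sub>R (c *\<^sub>C (x::'a::complex_vector)) = c *\<^sub>C (r *\<^sub>R x)"
  by (simp add: scaleR_scaleC scaleC_scaleC mult.commute)

lemma clinear_zero:
  assumes "clinear f" shows "f 0 = 0"
proof -
  have "f (0 *\<^sub>C 0) = 0 *\<^sub>C f 0" using assms unfolding clinear_def by blast
  then show ?thesis by simp
qed

lemma clinear_sum:
  assumes "clinear f" shows "f (\<Sum>i\<in>I. g i) = (\<Sum>i\<in>I. f (g i))"
  using assms by (induction I rule: infinite_finite_induct) (auto simp: clinear_zero clinear_def)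

locale hermitian_form =
  fixes B :: "'a::complex_vector \<Rightarrow> 'a \<Rightarrow> complex"
  assumes add_left: "B (x + y) z = B x z + B y z"
    and scaleC_left: "B (c *\<^sub>C x) y = c * B x y"
    and conj_sym: "B x y = cnj (B y x)"
begin

lemma add_right: "B x (y + z) = B x y + B x z"
  by (subst (1 2 3) conj_sym) (simp add: add_left)

lemma scaleC_right: "B x (c *\<^sub>C y) = cnj c * B x y"
  by (subst (1 2) conj_sym) (simp add: scaleC_left)

lemma zero_left [simp]: "B 0 y = 0"
  using scaleC_left[of 0 0 y] by simp

lemma zero_right [simp]: "B x 0 = 0"
  using scaleC_right[of x 0 0] by simp

lemma diff_left: "B (x - y) z = B x z - B y z"
  using add_left[of "x - y" y z] by (simp add: eq_diff_eq)

lemma sum_left: "B (\<Sum>i\<in>I. f i) y = (\<Sum>i\<in>I. B (f i) y)"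
  by (induction I rule: infinite_finite_induct) (auto simp: add_left)

lemma sum_right: "B y (\<Sum>i\<in>I. f i) = (\<Sum>i\<in>I. B y (f i))"
  by (induction I rule: infinite_finite_induct) (auto simp: add_right)

lemma scaleR_left: "B (r *\<^sub>R x) y = of_real r * B x y"
  by (simp add: scaleR_scaleC scaleC_left)

lemma scaleR_right: "B x (r *\<^sub>R y) = of_real r * B x y"
  by (simp add: scaleR_scaleC scaleC_right)

lemma self_real: "B x x = of_real (Re (B x x))"
  using arg_cong[OF conj_sym[of x x], of Im] by (simp add: complex_eq_iff)

lemma orth_sym: "B x y = 0 \<longleftrightarrow> B y x = 0"
  by (subst conj_sym) simp

end

locale positive_hermitian_form = hermitian_form +
  assumes positive: "x \<noteq> 0 \<Longrightarrow> 0 < Re (B x x)"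

interpretation cinner: positive_hermitian_form "cinner :: 'a::complex_inner \<Rightarrow> 'a \<Rightarrow> complex"
proof
  fix x y z :: 'a and c
  show "cinner (x + y) z = cinner x z + cinner y z" by (rule cinner_add_left)
  show "cinner (c *\<^sub>C x) y = c * cinner x y" by (rule cinner_scaleC_left)
  show "cinner x y = cnj (cinner y x)" by (rule cinner_conj)
  assume "x \<noteq> 0"
  then show "0 < Re (cinner x x)" by (simp flip: inner_Re_cinner)
qed

lemma cinner_self: "cinner x x = of_real ((norm (x::'a::complex_inner))\<^sup>2)"
proof -
  have "Re (cinner x x) = (norm x)\<^sup>2" by (simp add: power2_norm_eq_inner inner_Re_cinner)
  then show ?thesis by (subst cinner.self_real) simp
qed

lemma norm_scaleC: "norm (c *\<^sub>C (x::'a::complex_inner)) = cmod c * norm x"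
proof -
  have "cinner (c *\<^sub>C x) (c *\<^sub>C x) = (c * cnj c) * cinner x x"
    by (simp add: cinner.scaleC_left cinner.scaleC_right mult.assoc)
  also have "\<dots> = of_real ((cmod c * norm x)\<^sup>2)"
    by (simp only: complex_norm_square[symmetric] cinner_self of_real_mult[symmetric] power_mult_distrib)
  finally have "(norm (c *\<^sub>C x))\<^sup>2 = (cmod c * norm x)\<^sup>2"
    by (simp only: cinner_self of_real_eq_iff)
  then show ?thesis by (rule power2_eq_imp_eq) auto
qed

lemma cinner_cauchy_schwarz: "cmod (cinner (x::'a::complex_inner) y) \<le> norm x * norm y"
proof (cases "cinner x y = 0")
  case False
  define c where "c = cnj (cinner x y) / cmod (cinner x y)"
  have "cnj (cinner x y) * cinner x y = of_real ((cmod (cinner x y))\<^sup>2)"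
    by (simp only: mult.commute[of "cnj _"] complex_norm_square[symmetric])
  then have "c * cinner x y = of_real ((cmod (cinner x y))\<^sup>2) / cmod (cinner x y)"
    by (simp add: c_def)
  also have "\<dots> = cmod (cinner x y)"
    using False by (simp add: power2_eq_square)
  finally have "cmod (cinner x y) = Re (cinner (c *\<^sub>C x) y)"
    by (simp add: cinner_scaleC_left)
  also have "\<dots> \<le> norm (c *\<^sub>C x) * norm y"
    by (metis inner_Re_cinner norm_cauchy_schwarz)
  also have "\<dots> = norm x * norm y"
    using False by (simp add: norm_scaleC c_def norm_divide)
  finally show ?thesis .
qed simp

definition orthonormal :: "('a \<Rightarrow> 'a \<Rightarrow> complex) \<Rightarrow> 'i set \<Rightarrow> ('i \<Rightarrow> 'a) \<Rightarrow> bool" where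
  "orthonormal B I v \<longleftrightarrow> (\<forall>i\<in>I. \<forall>j\<in>I. B (v i) (v j) = (if i = j then 1 else 0))"

definition transfer_map ::
    "('a \<Rightarrow> 'a \<Rightarrow> complex) \<Rightarrow> 'i set \<Rightarrow> ('i \<Rightarrow> 'a) \<Rightarrow> ('i \<Rightarrow> 'b::complex_vector) \<Rightarrow> 'a \<Rightarrow> 'b" where
  "transfer_map B I a b h = (\<Sum>i\<in>I. B h (a i) *\<^sub>C b i)"

text \<open>For a finite orthonormal family this is its linear span; membership is witnessed by the
  Fourier expansion \<open>transfer_map B I v v\<close>.\<close>

definition orthospan :: "('a::complex_vector \<Rightarrow> 'a \<Rightarrow> complex) \<Rightarrow> 'i set \<Rightarrow> ('i \<Rightarrow> 'a) \<Rightarrow> 'a set" where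
  "orthospan B I v = {h. transfer_map B I v v h = h}"

lemma orthonormal_subset: "orthonormal B I v \<Longrightarrow> J \<subseteq> I \<Longrightarrow> orthonormal B J v"
  unfolding orthonormal_def by blast

lemma orthonormal_comp:
  "orthonormal B (g ` J) v \<Longrightarrow> inj_on g J \<Longrightarrow> orthonormal B J (v \<circ> g)"
  unfolding orthonormal_def inj_on_def by fastforce

context hermitian_form
begin

lemma orthonormal_case_sum:
  assumes "orthonormal B I a" "orthonormal B J b" "\<And>i j. i \<in> I \<Longrightarrow> j \<in> J \<Longrightarrow> B (a i) (b j) = 0"
  shows "orthonormal B (I <+> J) (case_sum a b)"
proof -
  have "B (b j) (a i) = 0" if "i \<in> I" "j \<in> J" for i j
    using assms(3)[OF that] orth_sym by blast
  then show ?thesis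
    using assms unfolding orthonormal_def by (intro ballI, elim PlusE) simp_all
qed

lemma orthonormal_fun_upd:
  assumes "orthonormal B (J - {j}) v" "B w w = 1" "\<And>k. k \<in> J - {j} \<Longrightarrow> B (v k) w = 0"
  shows "orthonormal B J (v(j := w))"
proof -
  have "B w (v k) = 0" if "k \<in> J - {j}" for k
    using assms(3)[OF that] orth_sym by blast
  then show ?thesis using assms unfolding orthonormal_def by auto
qed

lemma lincomb_left:
  assumes "finite I" "orthonormal B I v" "j \<in> I"
  shows "B (\<Sum>i\<in>I. c i *\<^sub>C v i) (v j) = c j"
proof -
  have "B (\<Sum>i\<in>I. c i *\<^sub>C v i) (v j) = (\<Sum>i\<in>I. c i * B (v i) (v j))"
    by (simp add: sum_left scaleC_left)
  also have "\<dots> = (\<Sum>i\<in>I. if i = j then c i else 0)"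
    using assms by (intro sum.cong) (auto simp: orthonormal_def)
  also have "\<dots> = c j" using assms by simp
  finally show ?thesis .
qed

lemma lincomb_lincomb:
  assumes "finite I" "orthonormal B I v"
  shows "B (\<Sum>i\<in>I. c i *\<^sub>C v i) (\<Sum>i\<in>I. d i *\<^sub>C v i) = (\<Sum>i\<in>I. c i * cnj (d i))"
proof -
  have "B (v i) (\<Sum>i\<in>I. d i *\<^sub>C v i) = cnj (d i)" if "i \<in> I" for i
    using conj_sym[of "v i"] lincomb_left[OF assms that] by simp
  then show ?thesis by (simp add: sum_left scaleC_left)
qed

lemma transfer_add: "transfer_map B I a b (x + y) = transfer_map B I a b x + transfer_map B I a b y"
  by (simp add: transfer_map_def add_left scaleC_add_left sum.distrib)

lemma transfer_scaleC: "transfer_map B I a b (c *\<^sub>C x) = c *\<^sub>C transfer_map B I a b x"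
  by (simp add: transfer_map_def scaleC_left scaleC_sum_right scaleC_scaleC)

lemma transfer_zero [simp]: "transfer_map B I a b 0 = 0"
  by (simp add: transfer_map_def)

lemma transfer_diff: "transfer_map B I a b (x - y) = transfer_map B I a b x - transfer_map B I a b y"
  by (simp add: transfer_map_def diff_left scaleC_diff_left sum_subtractf)

lemma transfer_scaleR: "transfer_map B I a b (r *\<^sub>R x) = r *\<^sub>R transfer_map B I a b x"
  by (simp add: scaleR_scaleC transfer_scaleC)

lemma transfer_clinear: "clinear (transfer_map B I a b)"
  by (simp add: clinear_def transfer_add transfer_scaleC)

lemma transfer_basis:
  assumes "finite I" "orthonormal B I a" "j \<in> I"
  shows "transfer_map B I a b (a j) = b j"
proof -
  have "transfer_map B I a b (a j) = (\<Sum>i\<in>I. if i = j then b i else 0)"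
    unfolding transfer_map_def using assms by (intro sum.cong) (auto simp: orthonormal_def)
  also have "\<dots> = b j" using assms by simp
  finally show ?thesis .
qed

lemma transfer_orthospan:
  assumes "finite I" "orthonormal B I a" "h \<in> orthospan B I a"
  shows "B (transfer_map B I a a x) h = B x h"
proof -
  have "B x h = B x (transfer_map B I a a h)"
    using assms(3) by (simp add: orthospan_def)
  also have "\<dots> = (\<Sum>i\<in>I. B x (a i) * cnj (B h (a i)))"
    by (simp add: transfer_map_def sum_right scaleC_right mult.commute)
  also have "\<dots> = (\<Sum>i\<in>I. B x (a i) * B (a i) h)"
    using conj_sym[of h] by simp
  also have "\<dots> = B (transfer_map B I a a x) h"
    by (simp add: transfer_map_def sum_left scaleC_left)
  finally show ?thesis ..
qed

lemma orthospan_add: "x \<in> orthospan B I v \<Longrightarrow> y \<in> orthospan B I v \<Longrightarrow> x + y \<in> orthospan B I v"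
  by (simp add: orthospan_def transfer_add)

lemma orthospan_diff: "x \<in> orthospan B I v \<Longrightarrow> y \<in> orthospan B I v \<Longrightarrow> x - y \<in> orthospan B I v"
  by (simp add: orthospan_def transfer_diff)

lemma orthospan_scaleC: "x \<in> orthospan B I v \<Longrightarrow> c *\<^sub>C x \<in> orthospan B I v"
  by (simp add: orthospan_def transfer_scaleC)

lemma orthospan_scaleR: "x \<in> orthospan B I v \<Longrightarrow> r *\<^sub>R x \<in> orthospan B I v"
  by (simp add: orthospan_def transfer_scaleR)

lemma orthospan_sum: "(\<And>j. j \<in> J \<Longrightarrow> f j \<in> orthospan B I v) \<Longrightarrow> (\<Sum>j\<in>J. f j) \<in> orthospan B I v"
  by (induction J rule: infinite_finite_induct) (auto simp: orthospan_def transfer_add)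

lemma orthospan_basis: "finite I \<Longrightarrow> orthonormal B I v \<Longrightarrow> j \<in> I \<Longrightarrow> v j \<in> orthospan B I v"
  by (simp add: orthospan_def transfer_basis)

lemma orthospan_lincomb:
  "finite I \<Longrightarrow> orthonormal B I v \<Longrightarrow> (\<Sum>i\<in>I. c i *\<^sub>C v i) \<in> orthospan B I v"
  by (intro orthospan_sum orthospan_scaleC orthospan_basis)

lemma orthospan_orth:
  assumes "h \<in> orthospan B I v" "\<And>i. i \<in> I \<Longrightarrow> B (v i) w = 0"
  shows "B h w = 0"
proof -
  have "B h w = B (transfer_map B I v v h) w"
    using assms(1) by (simp add: orthospan_def)
  also have "\<dots> = (\<Sum>i\<in>I. B h (v i) * B (v i) w)"
    by (simp add: transfer_map_def sum_left scaleC_left)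
  finally show ?thesis using assms(2) by simp
qed

lemma parseval:
  assumes "finite I" "orthonormal B I v" "x \<in> orthospan B I v" "y \<in> orthospan B I v"
  shows "B x y = (\<Sum>i\<in>I. B x (v i) * cnj (B y (v i)))"
  using lincomb_lincomb[OF assms(1,2), of "\<lambda>i. B x (v i)" "\<lambda>i. B y (v i)"] assms(3,4)
  by (simp add: orthospan_def transfer_map_def)

lemma orthospan_mono:
  assumes "finite J" "orthonormal B J w" "\<And>i. i \<in> I \<Longrightarrow> v i \<in> orthospan B J w"
  shows "orthospan B' I v \<subseteq> orthospan B J w"
proof
  fix h assume "h \<in> orthospan B' I v"
  then have "h = (\<Sum>i\<in>I. B' h (v i) *\<^sub>C v i)" by (simp add: orthospan_def transfer_map_def)
  also have "\<dots> \<in> orthospan B J w" using assms(3) by (intro orthospan_sum orthospan_scaleC)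
  finally show "h \<in> orthospan B J w" .
qed

end

context positive_hermitian_form
begin

lemma gram_schmidt_step:
  assumes u: "orthonormal B {..<m} u"
  shows "\<exists>m' u'. m \<le> m' \<and> m' \<le> Suc m \<and> (\<forall>i<m. u' i = u i) \<and> orthonormal B {..<m'} u'
    \<and> orthospan B {..<m} u \<subseteq> orthospan B {..<m'} u' \<and> a \<in> orthospan B {..<m'} u'"
proof -
  define p where "p = transfer_map B {..<m} u u a"
  have p: "p \<in> orthospan B {..<m} u"
    unfolding p_def transfer_map_def using u by (intro orthospan_lincomb) auto
  show ?thesis
  proof (cases "a = p")
    case True
    then show ?thesis using u p by (intro exI[of _ m] exI[of _ u]) auto
  next
    case False
    define r where "r = sqrt (Re (B (a - p) (a - p)))"
    have "r > 0" using False positive[of "a - p"] by (simp add: r_def)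
    have Brr: "B (a - p) (a - p) = of_real (r\<^sup>2)"
      using \<open>r > 0\<close> self_real[of "a - p"] by (simp add: r_def)
    define v where "v = (1 / r) *\<^sub>R (a - p)"
    have "B (a - p) (u k) = 0" if "k < m" for k
      using lincomb_left[OF _ u, of k "\<lambda>i. B a (u i)"] that
      by (simp add: p_def transfer_map_def diff_left)
    then have vu: "B (u k) v = 0" if "k < m" for k
      using that by (subst orth_sym) (simp add: v_def scaleR_left)
    have vv: "B v v = 1"
      using \<open>r > 0\<close> by (simp add: v_def scaleR_left scaleR_right Brr power2_eq_square)
    have u': "orthonormal B {..<Suc m} (u(m := v))"
      using u vu vv by (intro orthonormal_fun_upd) (auto simp: lessThan_Suc)
    have "u i \<in> orthospan B {..<Suc m} (u(m := v))" if "i < m" for i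
      using orthospan_basis[OF _ u', of i] that by simp
    then have old: "orthospan B {..<m} u \<subseteq> orthospan B {..<Suc m} (u(m := v))"
      by (intro orthospan_mono[OF _ u']) auto
    have "v \<in> orthospan B {..<Suc m} (u(m := v))"
      using orthospan_basis[OF _ u', of m] by simp
    then have "p + r *\<^sub>R v \<in> orthospan B {..<Suc m} (u(m := v))"
      using old p by (intro orthospan_add orthospan_scaleR) auto
    moreover have "p + r *\<^sub>R v = a"
      using \<open>r > 0\<close> by (simp add: v_def)
    ultimately have "a \<in> orthospan B {..<Suc m} (u(m := v))"
      by (simp only:)
    moreover have "\<forall>i<m. (u(m := v)) i = u i"
      by auto
    ultimately show ?thesis
      using u' old by (intro exI[of _ "Suc m"] exI[of _ "u(m := v)"] conjI order.refl le_SucI)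
  qed
qed

lemma gram_schmidt:
  fixes m :: nat
  assumes "orthonormal B {..<m} u"
  shows "\<exists>m' u'. m \<le> m' \<and> (\<forall>i<m. u' i = u i) \<and> orthonormal B {..<m'} u'
    \<and> orthospan B {..<m} u \<subseteq> orthospan B {..<m'} u' \<and> set L \<subseteq> orthospan B {..<m'} u'"
  using assms
proof (induction L arbitrary: m u)
  case Nil
  then show ?case by (intro exI[of _ m] exI[of _ u]) simp
next
  case (Cons a L)
  obtain m1 u1 where 1: "m \<le> m1" "\<forall>i<m. u1 i = u i" "orthonormal B {..<m1} u1"
      "orthospan B {..<m} u \<subseteq> orthospan B {..<m1} u1" "a \<in> orthospan B {..<m1} u1"
    using gram_schmidt_step[OF Cons.prems] by blast
  obtain m2 u2 where 2: "m1 \<le> m2" "\<forall>i<m1. u2 i = u1 i" "orthonormal B {..<m2} u2"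
      "orthospan B {..<m1} u1 \<subseteq> orthospan B {..<m2} u2" "set L \<subseteq> orthospan B {..<m2} u2"
    using Cons.IH[OF 1(3)] by blast
  have "\<forall>i<m. u2 i = u i" using 1(1,2) 2(2) by simp
  moreover have "set (a # L) \<subseteq> orthospan B {..<m2} u2" using 1(5) 2(4,5) by auto
  ultimately show ?case
    using 1(1,4) 2(1,3,4) by (intro exI[of _ m2] exI[of _ u2] conjI order.trans[of m m1 m2]) auto
qed

lemma gram_schmidt_through:
  assumes "x \<noteq> 0"
  shows "\<exists>(W::nat) u. 0 < W \<and> B x (u 0) = of_real (sqrt (Re (B x x))) \<and> orthonormal B {..<W} u
    \<and> set L \<subseteq> orthospan B {..<W} u"
proof -
  define r where "r = sqrt (Re (B x x))"
  have "r > 0" using positive[OF assms] by (simp add: r_def)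
  have "B x x = of_real (r\<^sup>2)"
    using \<open>r > 0\<close> self_real[of x] by (simp add: r_def)
  then have "orthonormal B {..<1::nat} (\<lambda>_. (1 / r) *\<^sub>R x)"
    using \<open>r > 0\<close> by (simp add: orthonormal_def scaleR_left scaleR_right power2_eq_square)
  from gram_schmidt[OF this, of L] obtain W :: nat and u where
    u: "1 \<le> W" "\<forall>i<1. u i = (1 / r) *\<^sub>R x" "orthonormal B {..<W} u" "set L \<subseteq> orthospan B {..<W} u"
    by (elim exE conjE) (rule that, assumption+)
  have "B x (u 0) = of_real (1 / r) * B x x"
    using u(2) by (simp add: scaleR_right)
  also have "\<dots> = of_real (1 / r * r\<^sup>2)"
    by (simp only: \<open>B x x = of_real (r\<^sup>2)\<close> of_real_mult)
  also have "1 / r * r\<^sup>2 = r"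
    using \<open>r > 0\<close> by (simp add: power2_eq_square)
  finally show ?thesis
    using u
    unfolding r_def by (intro exI[of _ W] exI[of _ u] conjI) simp_all
qed

end

lemma finite_orthonormal_basis:
  "\<exists>(m::nat) e. orthonormal cinner {..<m} e \<and> set L \<subseteq> orthospan cinner {..<m} (e::nat \<Rightarrow> 'a::complex_inner)"
proof -
  have "orthonormal cinner {..<0::nat} e" for e :: "nat \<Rightarrow> 'a"
    by (simp add: orthonormal_def)
  from cinner.gram_schmidt[OF this, of undefined L] show ?thesis
    by blast
qed

lemma sum_in_cspan:
  assumes "finite I" shows "(\<Sum>i\<in>I. c i *\<^sub>C v i) \<in> cspan (v ` I)"
proof -
  have "(\<Sum>i\<in>I. c i *\<^sub>C v i) = (\<Sum>y\<in>v ` I. \<Sum>i\<in>{i \<in> I. v i = y}. c i *\<^sub>C v i)"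
    using sum.image_gen[OF assms, of "\<lambda>i. c i *\<^sub>C v i" v] by simp
  also have "\<dots> = (\<Sum>y\<in>v ` I. (\<Sum>i\<in>{i \<in> I. v i = y}. c i) *\<^sub>C y)"
    unfolding scaleC_sum_left by (intro sum.cong refl) simp
  finally show ?thesis
    unfolding cspan_def using assms
    by (intro CollectI exI[of _ "v ` I"] exI[of _ "\<lambda>y. \<Sum>i\<in>{i \<in> I. v i = y}. c i"]) simp
qed

lemma transfer_range:
  assumes "finite I" shows "range (transfer_map B I a b) \<subseteq> cspan (b ` I)"
proof
  fix y assume "y \<in> range (transfer_map B I a b)"
  then obtain h where "y = transfer_map B I a b h" by blast
  then show "y \<in> cspan (b ` I)"
    unfolding transfer_map_def using sum_in_cspan[OF assms] by simp
qed

lemma orthospan_subset_cspan: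
  assumes "finite I" shows "orthospan B I v \<subseteq> cspan (v ` I)"
proof
  fix h assume "h \<in> orthospan B I v"
  then have "h = transfer_map B I v v h" by (simp add: orthospan_def)
  then show "h \<in> cspan (v ` I)" using transfer_range[OF assms, of B v v] by auto
qed

lemma norm_lincomb:
  assumes "finite I" "orthonormal cinner I v"
  shows "(norm (\<Sum>i\<in>I. c i *\<^sub>C v i))\<^sup>2 = (\<Sum>i\<in>I. (cmod (c i))\<^sup>2)"
proof -
  have "of_real ((norm (\<Sum>i\<in>I. c i *\<^sub>C v i))\<^sup>2) = (\<Sum>i\<in>I. c i * cnj (c i))"
    using cinner.lincomb_lincomb[OF assms, of c c] by (simp only: cinner_self)
  also have "\<dots> = of_real (\<Sum>i\<in>I. (cmod (c i))\<^sup>2)"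
    by (simp only: of_real_sum complex_norm_square)
  finally show ?thesis by (simp only: of_real_eq_iff)
qed

lemma bessel_inequality:
  assumes "finite I" "orthonormal cinner I v"
  shows "(\<Sum>i\<in>I. (cmod (cinner h (v i)))\<^sup>2) \<le> (norm h)\<^sup>2"
proof -
  define p where "p = transfer_map cinner I v v h"
  have "cinner (h - p) (v i) = 0" if "i \<in> I" for i
    using cinner.lincomb_left[OF assms that] by (simp add: p_def transfer_map_def cinner.diff_left)
  then have "cinner (h - p) p = 0"
    unfolding p_def transfer_map_def by (simp add: cinner.sum_right cinner.scaleC_right)
  then have "(norm h)\<^sup>2 = (norm (h - p))\<^sup>2 + (norm p)\<^sup>2"
    using norm_add_Pythagorean[of "h - p" p] by (simp add: orthogonal_def inner_Re_cinner)
  moreover have "(norm p)\<^sup>2 = (\<Sum>i\<in>I. (cmod (cinner h (v i)))\<^sup>2)"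
    unfolding p_def transfer_map_def using assms by (rule norm_lincomb)
  ultimately show ?thesis by simp
qed

lemma norm_transfer_le:
  assumes "finite I" "orthonormal cinner I a" "orthonormal cinner I b"
  shows "norm (transfer_map cinner I a b h) \<le> norm h"
proof -
  have "(norm (transfer_map cinner I a b h))\<^sup>2 \<le> (norm h)\<^sup>2"
    using norm_lincomb[OF assms(1,3)] bessel_inequality[OF assms(1,2), of h]
    by (simp add: transfer_map_def)
  then show ?thesis by (rule power2_le_imp_le) simp
qed

lemma norm_transfer_orthospan:
  assumes "finite I" "orthonormal cinner I a" "orthonormal cinner I b" "h \<in> orthospan cinner I a"
  shows "norm (transfer_map cinner I a b h) = norm h"
proof -
  have "(norm (transfer_map cinner I a b h))\<^sup>2 = (norm (transfer_map cinner I a a h))\<^sup>2"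
    using norm_lincomb[OF assms(1,3)] norm_lincomb[OF assms(1,2)] by (simp add: transfer_map_def)
  then show ?thesis using assms(4) by (simp add: orthospan_def power2_eq_iff_nonneg)
qed

section \<open>Fresh orthonormal vectors in infinite dimension\<close>

lemma orthospan_cong: "(\<And>i. i \<in> I \<Longrightarrow> v i = w i) \<Longrightarrow> orthospan B I v = orthospan B I w"
  unfolding orthospan_def transfer_map_def by (metis (no_types, lifting) sum.cong)

lemma orthonormal_extension:
  fixes e :: "nat \<Rightarrow> 'a::complex_inner"
  assumes infinite_dim: "\<not> (\<exists>B::'a set. finite B \<and> cspan B = UNIV)"
    and e: "orthonormal cinner {..<m} e"
  shows "\<exists>e'. (\<forall>i<m. e' i = e i) \<and> orthonormal cinner {..<m + k} e'"
proof (induction k)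
  case 0
  then show ?case using e by (intro exI[of _ e]) simp
next
  case (Suc k)
  then obtain e1 where e1: "\<forall>i<m. e1 i = e i" "orthonormal cinner {..<m + k} e1"
    by blast
  have "orthospan cinner {..<m + k} e1 \<noteq> UNIV"
  proof
    assume "orthospan cinner {..<m + k} e1 = UNIV"
    then have "cspan (e1 ` {..<m + k}) = UNIV"
      using orthospan_subset_cspan[of "{..<m + k}" cinner e1] by (simp add: top.extremum_unique)
    then show False
      using infinite_dim by (meson finite_imageI finite_lessThan)
  qed
  then obtain a where a: "a \<notin> orthospan cinner {..<m + k} e1"
    by blast
  obtain m' e' where e': "m + k \<le> m'" "m' \<le> Suc (m + k)" "\<forall>i<m + k. e' i = e1 i"
      "orthonormal cinner {..<m'} e'" "a \<in> orthospan cinner {..<m'} e'"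
    using cinner.gram_schmidt_step[OF e1(2), of a] by blast
  have "m' \<noteq> m + k"
    using a e'(3,5) orthospan_cong[of "{..<m + k}" e' e1 cinner] by auto
  then have "m' = m + Suc k"
    using e'(1,2) by simp
  then show ?case
    using e1(1) e'(3,4) by (intro exI[of _ e']) simp
qed

lemma orthonormal_fresh_family:
  fixes e :: "nat \<Rightarrow> 'a::complex_inner" and J :: "'j set"
  assumes infinite_dim: "\<not> (\<exists>B::'a set. finite B \<and> cspan B = UNIV)"
    and e: "orthonormal cinner {..<m} e" and J: "finite J"
  obtains f where "orthonormal cinner J f" "\<And>j i. j \<in> J \<Longrightarrow> i < m \<Longrightarrow> cinner (f j) (e i) = 0"
proof -
  obtain e' where e': "\<forall>i<m. e' i = e i" "orthonormal cinner {..<m + card J} e'"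
    using orthonormal_extension[OF infinite_dim e] by blast
  obtain g where g: "bij_betw g J {0..<card J}"
    using ex_bij_betw_finite_nat[OF J] by blast
  have image: "(\<lambda>j. m + g j) ` J \<subseteq> {..<m + card J}"
    using g by (auto simp: bij_betw_def)
  moreover have "inj_on (\<lambda>j. m + g j) J"
    using g by (auto simp: bij_betw_def inj_on_def)
  ultimately have "orthonormal cinner J (e' \<circ> (\<lambda>j. m + g j))"
    by (rule orthonormal_comp[OF orthonormal_subset[OF e'(2)]])
  moreover have "cinner (e' (m + g j)) (e i) = 0" if "j \<in> J" "i < m" for i j
  proof -
    have "m + g j \<in> {..<m + card J}" "i \<in> {..<m + card J}" "m + g j \<noteq> i"
      using image that by auto
    then have "cinner (e' (m + g j)) (e' i) = 0"
      using e'(2) unfolding orthonormal_def by simp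
    then show ?thesis using e'(1) that by simp
  qed
  ultimately show thesis
    by (intro that[of "e' \<circ> (\<lambda>j. m + g j)"]) simp_all
qed

section \<open>Isometric dilations of strict contractions\<close>

definition defect_form :: "('a::complex_inner \<Rightarrow> 'a) \<Rightarrow> 'a \<Rightarrow> 'a \<Rightarrow> complex" where
  "defect_form C a b = cinner a b - cinner (C a) (C b)"

lemma hermitian_defect_form:
  assumes "clinear C" shows "hermitian_form (defect_form C)"
proof
  fix x y z :: 'a and c
  have C: "C (x + y) = C x + C y" "C (c *\<^sub>C x) = c *\<^sub>C C x"
    using assms by (simp_all add: clinear_def)
  show "defect_form C (x + y) z = defect_form C x z + defect_form C y z"
    by (simp add: defect_form_def C cinner.add_left)
  show "defect_form C (c *\<^sub>C x) y = c * defect_form C x y"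
    by (simp add: defect_form_def C cinner.scaleC_left right_diff_distrib)
  show "defect_form C x y = cnj (defect_form C y x)"
    using cinner.conj_sym[of x y] cinner.conj_sym[of "C x" "C y"] by (simp add: defect_form_def)
qed

lemma defect_form_lower_bound:
  assumes "\<And>h. norm (C h) \<le> q * norm h" "0 \<le> q"
  shows "(1 - q\<^sup>2) * (norm h)\<^sup>2 \<le> Re (defect_form C h h)"
proof -
  have "(norm (C h))\<^sup>2 \<le> (q * norm h)\<^sup>2"
    using assms by (intro power_mono) auto
  then show ?thesis
    by (simp add: defect_form_def cinner_self power_mult_distrib left_diff_distrib)
qed

lemma positive_defect_form:
  assumes "clinear C" "\<And>h. norm (C h) \<le> q * norm h" "0 \<le> q" "q < 1"
  shows "positive_hermitian_form (defect_form C)"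
proof -
  interpret hermitian_form "defect_form C" using assms(1) by (rule hermitian_defect_form)
  show ?thesis
  proof
    fix x :: 'a assume "x \<noteq> 0"
    moreover have "q\<^sup>2 < 1" using assms(3,4) by (simp add: power_less_one_iff)
    ultimately have "0 < (1 - q\<^sup>2) * (norm x)\<^sup>2" by simp
    then show "0 < Re (defect_form C x x)"
      using defect_form_lower_bound[OF assms(2,3), of x] by linarith
  qed
qed

locale dilation_frame =
  fixes m :: nat and e :: "nat \<Rightarrow> 'a::complex_inner" and C :: "'a \<Rightarrow> 'a"
    and W :: nat and u :: "nat \<Rightarrow> 'a" and N :: nat and f :: "nat \<times> nat \<Rightarrow> 'a"
  assumes e_orthonormal: "orthonormal cinner {..<m} e"
    and C_linear: "clinear C"
    and C_range: "C h \<in> orthospan cinner {..<m} e"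
    and u_orthonormal: "orthonormal (defect_form C) {..<W} u"
    and e_in_u: "i < m \<Longrightarrow> e i \<in> orthospan (defect_form C) {..<W} u"
    and f_orthonormal: "orthonormal cinner ({1..N} \<times> {..<W}) f"
    and f_e: "p \<in> {1..N} \<times> {..<W} \<Longrightarrow> i < m \<Longrightarrow> cinner (f p) (e i) = 0"
    and N_ge_2: "2 \<le> N"
begin

abbreviation F :: "'a set" where
  "F \<equiv> orthospan cinner {..<m} e"

sublocale defect: hermitian_form "defect_form C"
  by (rule hermitian_defect_form[OF C_linear])

lemma C_add: "C (a + b) = C a + C b" and C_scaleC: "C (c *\<^sub>C a) = c *\<^sub>C C a"
  using C_linear by (simp_all add: clinear_def)

lemma e_in_F: "i < m \<Longrightarrow> e i \<in> F"
  using cinner.orthospan_basis[OF _ e_orthonormal] by simp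

lemma F_in_u: "h \<in> F \<Longrightarrow> h \<in> orthospan (defect_form C) {..<W} u"
  using defect.orthospan_mono[OF _ u_orthonormal, of "{..<m}" e cinner] e_in_u by auto

lemma C_power_in_F: "x \<in> F \<Longrightarrow> (C ^^ k) x \<in> F"
  by (cases k) (simp_all add: C_range)

lemma F_orth_f:
  assumes "y \<in> F" "p \<in> {1..N} \<times> {..<W}" shows "cinner y (f p) = 0"
proof (rule cinner.orthospan_orth[OF assms(1)])
  fix i assume "i \<in> {..<m}"
  then show "cinner (e i) (f p) = 0"
    using f_e[OF assms(2)] by (subst cinner.orth_sym) simp
qed

lemma f_orth_F: "y \<in> F \<Longrightarrow> p \<in> {1..N} \<times> {..<W} \<Longrightarrow> cinner (f p) y = 0"
  by (subst cinner.orth_sym) (rule F_orth_f)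

text \<open>Vectors in the \<open>l\<close>-th of the \<open>N\<close> mutually orthogonal copies of \<open>\<complex>\<^sup>W\<close> spanned by \<open>f\<close>.\<close>

definition row :: "nat \<Rightarrow> (nat \<Rightarrow> complex) \<Rightarrow> 'a" where
  "row l c = (\<Sum>i<W. c i *\<^sub>C f (l, i))"

definition layer :: "nat \<Rightarrow> 'a \<Rightarrow> 'a" where
  "layer l h = row l (\<lambda>i. defect_form C h (u i))"

lemma row_orthonormal:
  assumes "l \<in> {1..N}" shows "orthonormal cinner {..<W} (\<lambda>i. f (l, i))"
proof -
  have "Pair l ` {..<W} \<subseteq> {1..N} \<times> {..<W}" using assms by auto
  moreover have "inj_on (Pair l) {..<W}" by (simp add: inj_on_def)
  ultimately show ?thesis
    using orthonormal_comp[OF orthonormal_subset[OF f_orthonormal]] by (simp add: comp_def)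
qed

lemma cinner_row_F: "l \<in> {1..N} \<Longrightarrow> y \<in> F \<Longrightarrow> cinner (row l c) y = 0"
  by (simp add: row_def cinner.sum_left cinner.scaleC_left f_orth_F)

lemma cinner_F_row: "l \<in> {1..N} \<Longrightarrow> y \<in> F \<Longrightarrow> cinner y (row l c) = 0"
  by (simp add: row_def cinner.sum_right cinner.scaleC_right F_orth_f)

lemma cinner_row_f:
  assumes "l \<in> {1..N}" "l' \<in> {1..N}" "j < W"
  shows "cinner (row l c) (f (l', j)) = (if l = l' then c j else 0)"
proof (cases "l = l'")
  case True
  then show ?thesis
    using cinner.lincomb_left[OF _ row_orthonormal[OF assms(1)], of j c] assms by (simp add: row_def)
next
  case False
  then have "cinner (f (l, i)) (f (l', j)) = 0" if "i < W" for i
    using f_orthonormal assms that unfolding orthonormal_def by auto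
  then show ?thesis
    using False by (simp add: row_def cinner.sum_left cinner.scaleC_left)
qed

lemma cinner_f_row:
  assumes "l \<in> {1..N}" "l' \<in> {1..N}" "j < W"
  shows "cinner (f (l', j)) (row l c) = (if l = l' then cnj (c j) else 0)"
  using cinner_row_f[OF assms, of c] cinner.conj_sym[of "f (l', j)" "row l c"] by simp

lemma cinner_row_row:
  assumes "l \<in> {1..N}" "l' \<in> {1..N}"
  shows "cinner (row l c) (row l' d) = (if l = l' then (\<Sum>i<W. c i * cnj (d i)) else 0)"
proof -
  have "cinner (row l c) (row l' d) = (\<Sum>i<W. cnj (d i) * cinner (row l c) (f (l', i)))"
    by (simp add: row_def[of l'] cinner.sum_right cinner.scaleC_right)
  then show ?thesis
    using assms by (simp add: cinner_row_f mult.commute)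
qed

lemma layer_add: "layer l (a + b) = layer l a + layer l b"
  by (simp add: layer_def row_def defect.add_left scaleC_add_left sum.distrib)

lemma layer_scaleC: "layer l (c *\<^sub>C a) = c *\<^sub>C layer l a"
  by (simp add: layer_def row_def defect.scaleC_left scaleC_sum_right scaleC_scaleC)

definition phi :: "'a \<Rightarrow> 'a" where
  "phi h = C h + layer 1 h"

lemma phi_clinear: "clinear phi"
  by (simp add: clinear_def phi_def C_add C_scaleC layer_add layer_scaleC scaleC_add_right)

lemma phi_isometric:
  assumes "a \<in> F" "b \<in> F" shows "cinner (phi a) (phi b) = cinner a b"
proof -
  have "cinner (phi a) (phi b) = cinner (C a) (C b) + cinner (layer 1 a) (layer 1 b)"
    using N_ge_2 by (simp add: phi_def layer_def cinner.add_left cinner.add_right C_range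
        cinner_row_F cinner_F_row)
  also have "cinner (layer 1 a) (layer 1 b) = defect_form C a b"
    using N_ge_2 defect.parseval[OF _ u_orthonormal F_in_u[OF assms(1)] F_in_u[OF assms(2)]]
    by (simp add: layer_def cinner_row_row)
  finally show ?thesis by (simp add: defect_form_def)
qed

lemma phi_orth_f: "l \<in> {2..N} \<Longrightarrow> j < W \<Longrightarrow> cinner (phi a) (f (l, j)) = 0"
  using N_ge_2 by (simp add: phi_def layer_def cinner.add_left F_orth_f C_range cinner_row_f)

definition exit_vector :: "'a \<Rightarrow> bool" where
  "exit_vector w \<longleftrightarrow> cinner w w = 1 \<and> (\<forall>a\<in>F. cinner (phi a) w = 0)
     \<and> (\<forall>p \<in> {2..N} \<times> {..<W} - {(N, 0)}. cinner (f p) w = 0)"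

text \<open>The dilation maps \<open>e i\<close> to \<open>phi (e i)\<close> and shifts every layer of \<open>f\<close> one step up, except
  that \<open>f (N - 1, 0)\<close> is sent to the exit vector \<open>w\<close>; it vanishes on the orthogonal complement.\<close>

definition ports :: "(nat + nat \<times> nat) set" where
  "ports = {..<m} <+> {1..<N} \<times> {..<W}"

definition inputs :: "nat + nat \<times> nat \<Rightarrow> 'a" where
  "inputs = case_sum e f"

definition outputs :: "'a \<Rightarrow> nat + nat \<times> nat \<Rightarrow> 'a" where
  "outputs w = case_sum (phi \<circ> e) ((\<lambda>(l, i). f (l + 1, i))((N - 1, 0) := w))"

definition dilation :: "'a \<Rightarrow> 'a \<Rightarrow> 'a" where
  "dilation w = transfer_map cinner ports inputs (outputs w)"

lemma finite_ports: "finite ports"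
  by (simp add: ports_def)

lemma inputs_orthonormal: "orthonormal cinner ports inputs"
  unfolding ports_def inputs_def
proof (rule cinner.orthonormal_case_sum[OF e_orthonormal orthonormal_subset[OF f_orthonormal]])
  fix i p assume "i \<in> {..<m}" "p \<in> {1..<N} \<times> {..<W}"
  then show "cinner (e i) (f p) = 0"
    using f_e by (subst cinner.orth_sym) auto
qed auto

lemma outputs_orthonormal:
  assumes "exit_vector w" shows "orthonormal cinner ports (outputs w)"
proof -
  define shift :: "nat \<times> nat \<Rightarrow> nat \<times> nat" where "shift p = (fst p + 1, snd p)" for p
  define J where "J = {1..<N} \<times> {..<W}"
  have "orthonormal cinner {..<m} (phi \<circ> e)"
    using e_orthonormal phi_isometric[OF e_in_F e_in_F] by (simp add: orthonormal_def)
  moreover have "orthonormal cinner J ((f \<circ> shift)((N - 1, 0) := w))"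
  proof (rule cinner.orthonormal_fun_upd)
    have "shift ` (J - {(N - 1, 0)}) \<subseteq> {1..N} \<times> {..<W}" "inj_on shift (J - {(N - 1, 0)})"
      by (auto simp: J_def shift_def inj_on_def)
    then show "orthonormal cinner (J - {(N - 1, 0)}) (f \<circ> shift)"
      by (rule orthonormal_comp[OF orthonormal_subset[OF f_orthonormal]])
    show "cinner w w = 1" using assms by (simp add: exit_vector_def)
    fix k assume "k \<in> J - {(N - 1, 0)}"
    then have "shift k \<in> {2..N} \<times> {..<W} - {(N, 0)}"
      using N_ge_2 by (auto simp: J_def shift_def)
    then show "cinner ((f \<circ> shift) k) w = 0" using assms by (simp add: exit_vector_def)
  qed
  moreover have "cinner ((phi \<circ> e) i) (((f \<circ> shift)((N - 1, 0) := w)) p) = 0"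
    if "i \<in> {..<m}" "p \<in> J" for i p
    using that assms e_in_F phi_orth_f N_ge_2
    by (auto simp: exit_vector_def J_def shift_def)
  moreover have "(\<lambda>(l, i). f (l + 1, i)) = f \<circ> shift"
    by (auto simp: shift_def)
  ultimately show ?thesis
    unfolding ports_def outputs_def J_def by (intro cinner.orthonormal_case_sum) simp_all
qed

lemma dilation_clinear: "clinear (dilation w)"
  unfolding dilation_def by (rule cinner.transfer_clinear)

lemma dilation_inputs: "p \<in> ports \<Longrightarrow> dilation w (inputs p) = outputs w p"
  unfolding dilation_def by (rule cinner.transfer_basis[OF finite_ports inputs_orthonormal])

lemma dilation_F:
  assumes "h \<in> F" shows "dilation w h = phi h"
proof -
  have h: "h = (\<Sum>i<m. cinner h (e i) *\<^sub>C e i)"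
    using assms by (simp add: orthospan_def transfer_map_def)
  have "dilation w (e i) = phi (e i)" if "i < m" for i
    using dilation_inputs[of "Inl i"] that by (simp add: ports_def inputs_def outputs_def InlI InrI)
  then have "dilation w h = (\<Sum>i<m. cinner h (e i) *\<^sub>C phi (e i))"
    using dilation_clinear by (subst h) (simp add: clinear_sum clinear_def)
  also have "\<dots> = phi h"
    using phi_clinear by (subst (2) h) (simp add: clinear_sum clinear_def)
  finally show ?thesis .
qed

lemma dilation_f:
  assumes "l \<in> {1..<N}" "i < W"
  shows "dilation w (f (l, i)) = (if (l, i) = (N - 1, 0) then w else f (l + 1, i))"
  using dilation_inputs[of "Inr (l, i)"] assms by (simp add: ports_def inputs_def outputs_def InlI InrI)

lemma dilation_layer:
  assumes "1 \<le> l" "l < N - 1" shows "dilation w (layer l h) = layer (Suc l) h"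
  using dilation_clinear assms
  by (simp add: layer_def row_def clinear_sum clinear_def dilation_f)

lemma dilation_last_layer:
  assumes "0 < W" "y \<in> F"
  shows "cinner (dilation w (layer (N - 1) h)) y = defect_form C h (u 0) * cinner w y"
proof -
  have "cinner (dilation w (layer (N - 1) h)) y
      = (\<Sum>i<W. defect_form C h (u i) * cinner (dilation w (f (N - 1, i))) y)"
    using dilation_clinear
    by (simp add: layer_def row_def clinear_sum clinear_def cinner.sum_left cinner.scaleC_left)
  also have "\<dots> = (\<Sum>i<W. if i = 0 then defect_form C h (u 0) * cinner w y else 0)"
    using N_ge_2 assms(2) by (intro sum.cong) (auto simp: dilation_f f_orth_F)
  finally show ?thesis
    using assms(1) by simp
qed

lemma cinner_dilation_F: "a \<in> F \<Longrightarrow> y \<in> F \<Longrightarrow> cinner (dilation w a) y = cinner (C a) y"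
  using N_ge_2 by (simp add: dilation_F phi_def layer_def cinner.add_left cinner_row_F)

lemma dilation_finite_rank: "finite_rank (dilation w)"
  unfolding finite_rank_def dilation_def
  by (intro exI[of _ "outputs w ` ports"] conjI finite_imageI finite_ports transfer_range)

lemma norm_dilation_le: "exit_vector w \<Longrightarrow> norm (dilation w h) \<le> norm h"
  unfolding dilation_def
  by (rule norm_transfer_le[OF finite_ports inputs_orthonormal outputs_orthonormal])

text \<open>The first \<open>N\<close> iterates of \<open>x \<in> F\<close>: the compression \<open>C\<close> acts on the \<open>F\<close>-component while
  the defects produced so far travel one layer up per step.\<close>

definition orbit :: "'a \<Rightarrow> nat \<Rightarrow> 'a" where
  "orbit x k = (C ^^ k) x + (\<Sum>l\<in>{1..k}. layer l ((C ^^ (k - l)) x))"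

lemma dilation_orbit:
  assumes "x \<in> F" "Suc k < N"
  shows "dilation w (orbit x k) = orbit x (Suc k)"
proof -
  have "dilation w (orbit x k)
      = dilation w ((C ^^ k) x) + (\<Sum>l\<in>{1..k}. dilation w (layer l ((C ^^ (k - l)) x)))"
    using dilation_clinear by (simp add: orbit_def clinear_sum clinear_def)
  also have "dilation w ((C ^^ k) x) = phi ((C ^^ k) x)"
    by (rule dilation_F[OF C_power_in_F[OF assms(1)]])
  also have "(\<Sum>l\<in>{1..k}. dilation w (layer l ((C ^^ (k - l)) x)))
      = (\<Sum>l\<in>{1..k}. layer (Suc l) ((C ^^ (k - l)) x))"
    using assms(2) by (intro sum.cong refl dilation_layer) auto
  also have "(\<Sum>l\<in>{1..k}. layer (Suc l) ((C ^^ (k - l)) x)) = (\<Sum>l\<in>{Suc 1..Suc k}. layer l ((C ^^ (Suc k - l)) x))"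
    by (simp only: sum.shift_bounds_cl_Suc_ivl diff_Suc_Suc)
  also have "phi ((C ^^ k) x) + \<dots> = orbit x (Suc k)"
  proof -
    have "(\<Sum>l\<in>{1..Suc k}. layer l ((C ^^ (Suc k - l)) x))
        = layer 1 ((C ^^ (Suc k - 1)) x) + (\<Sum>l\<in>{Suc 1..Suc k}. layer l ((C ^^ (Suc k - l)) x))"
      by (rule sum.atLeast_Suc_atMost) simp
    then show ?thesis
      by (simp only: orbit_def phi_def funpow.simps comp_apply add.assoc diff_Suc_1)
  qed
  finally show ?thesis .
qed

lemma dilation_power_orbit: "x \<in> F \<Longrightarrow> k < N \<Longrightarrow> (dilation w ^^ k) x = orbit x k"
proof (induction k)
  case 0
  then show ?case by (simp add: orbit_def)
next
  case (Suc k)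
  then show ?case by (simp add: dilation_orbit)
qed

lemma orbit_in_ports_span:
  assumes "x \<in> F" "k < N" shows "orbit x k \<in> orthospan cinner ports inputs"
proof -
  have "e i \<in> orthospan cinner ports inputs" if "i < m" for i
    using cinner.orthospan_basis[OF finite_ports inputs_orthonormal, of "Inl i"] that
    by (simp add: ports_def inputs_def InlI InrI)
  then have F: "F \<subseteq> orthospan cinner ports inputs"
    by (intro cinner.orthospan_mono[OF finite_ports inputs_orthonormal]) simp
  have "layer l h \<in> orthospan cinner ports inputs" if "l \<in> {1..k}" for l h
  proof -
    have "f (l, i) \<in> orthospan cinner ports inputs" if "i < W" for i
      using cinner.orthospan_basis[OF finite_ports inputs_orthonormal, of "Inr (l, i)"]
        \<open>l \<in> {1..k}\<close> \<open>k < N\<close> that by (simp add: ports_def inputs_def InlI InrI)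
    then show ?thesis
      unfolding layer_def row_def by (intro cinner.orthospan_sum cinner.orthospan_scaleC) simp
  qed
  then show ?thesis
    unfolding orbit_def using F C_power_in_F[OF assms(1)]
    by (intro cinner.orthospan_add cinner.orthospan_sum) auto
qed

lemma dilation_isometric_on_orbit:
  assumes "exit_vector w" "x \<in> F" "k < N"
  shows "norm ((dilation w ^^ Suc k) x) = norm ((dilation w ^^ k) x)"
proof -
  have "norm (dilation w (orbit x k)) = norm (orbit x k)"
    unfolding dilation_def
    by (rule norm_transfer_orthospan[OF finite_ports inputs_orthonormal
          outputs_orthonormal[OF assms(1)] orbit_in_ports_span[OF assms(2,3)]])
  then show ?thesis by (simp add: dilation_power_orbit[OF assms(2,3)])
qed

lemma dilation_power_N:
  assumes "0 < W" "x \<in> F" "y \<in> F"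
  shows "cinner ((dilation w ^^ N) x) y = cinner ((C ^^ N) x) y + defect_form C x (u 0) * cinner w y"
proof -
  have "(dilation w ^^ N) x = dilation w ((dilation w ^^ (N - 1)) x)"
    using N_ge_2 by (cases N) simp_all
  also have "\<dots> = dilation w (orbit x (N - 1))"
    using assms(2) N_ge_2 by (simp add: dilation_power_orbit)
  also have "\<dots> = phi ((C ^^ (N - 1)) x) + (\<Sum>l\<in>{1..N - 1}. dilation w (layer l ((C ^^ (N - 1 - l)) x)))"
    using dilation_clinear assms(2)
    by (simp add: orbit_def clinear_sum clinear_def dilation_F C_power_in_F)
  moreover have "C ((C ^^ (N - 1)) x) = (C ^^ N) x"
    using N_ge_2 by (cases N) simp_all
  ultimately have "cinner ((dilation w ^^ N) x) y = cinner ((C ^^ N) x) y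
      + (\<Sum>l\<in>{1..N - 1}. cinner (dilation w (layer l ((C ^^ (N - 1 - l)) x))) y)"
    using N_ge_2 assms(3)
    by (simp add: phi_def layer_def cinner.add_left cinner.sum_left cinner_row_F)
  also have "(\<Sum>l\<in>{1..N - 1}. cinner (dilation w (layer l ((C ^^ (N - 1 - l)) x))) y)
      = (\<Sum>l\<in>{1..N - 1}. if l = N - 1 then defect_form C x (u 0) * cinner w y else 0)"
  proof (intro sum.cong refl)
    fix l assume l: "l \<in> {1..N - 1}"
    show "cinner (dilation w (layer l ((C ^^ (N - 1 - l)) x))) y
        = (if l = N - 1 then defect_form C x (u 0) * cinner w y else 0)"
    proof (cases "l = N - 1")
      case True
      then show ?thesis using dilation_last_layer[OF assms(1,3)] by simp
    next
      case False
      then have "dilation w (layer l ((C ^^ (N - 1 - l)) x)) = layer (Suc l) ((C ^^ (N - 1 - l)) x)"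
        using l by (intro dilation_layer) auto
      moreover have "Suc l \<in> {1..N}" using l by auto
      ultimately show ?thesis using False assms(3) by (simp add: layer_def cinner_row_F)
    qed
  qed
  finally show ?thesis
    using N_ge_2 by simp
qed

lemma defect_coefficients_bound:
  assumes kappa: "\<And>h. \<kappa> * (norm h)\<^sup>2 \<le> Re (defect_form C h h)" "0 < \<kappa>"
    and C_contr: "\<And>h. norm (C h) \<le> norm h"
  shows "\<kappa> * (\<Sum>i<W. (cmod (cinner v (C (u i))))\<^sup>2) \<le> (norm v)\<^sup>2"
proof -
  define d where "d i = cinner v (C (u i))" for i
  define Q where "Q = (\<Sum>i<W. (cmod (d i))\<^sup>2)"
  define \<xi> where "\<xi> = (\<Sum>i<W. d i *\<^sub>C u i)"
  have Q_nonneg: "0 \<le> Q" by (simp add: Q_def sum_nonneg)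
  have "defect_form C \<xi> \<xi> = of_real Q"
    unfolding \<xi>_def Q_def of_real_sum complex_norm_square
    by (rule defect.lincomb_lincomb[OF _ u_orthonormal]) simp
  then have "\<kappa> * (norm \<xi>)\<^sup>2 \<le> Q"
    using kappa(1)[of \<xi>] by simp
  have "cinner v (C \<xi>) = (\<Sum>i<W. cnj (d i) * d i)"
    using C_linear by (simp add: \<xi>_def clinear_sum clinear_def cinner.sum_right cinner.scaleC_right d_def)
  also have "\<dots> = of_real Q"
    unfolding Q_def of_real_sum complex_norm_square by (simp add: mult.commute)
  finally have "Q = cmod (cinner v (C \<xi>))"
    using Q_nonneg by simp
  also have "\<dots> \<le> norm v * norm \<xi>"
    using cinner_cauchy_schwarz[of v "C \<xi>"] C_contr[of \<xi>] by (meson mult_left_mono norm_ge_zero order_trans)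
  finally have "Q \<le> norm v * norm \<xi>" .
  then have "Q * Q \<le> (norm v * norm \<xi>) * (norm v * norm \<xi>)"
    using Q_nonneg by (intro mult_mono) auto
  then have "\<kappa> * Q * Q \<le> \<kappa> * (norm v * norm \<xi>)\<^sup>2"
    using kappa(2) by (simp add: power2_eq_square mult.assoc)
  also have "\<dots> = (norm v)\<^sup>2 * (\<kappa> * (norm \<xi>)\<^sup>2)"
    by (simp add: power_mult_distrib)
  also have "\<dots> \<le> (norm v)\<^sup>2 * Q"
    using \<open>\<kappa> * (norm \<xi>)\<^sup>2 \<le> Q\<close> by (simp add: mult_left_mono)
  finally have "(\<kappa> * Q) * Q \<le> (norm v)\<^sup>2 * Q" .
  then have "\<kappa> * Q \<le> (norm v)\<^sup>2"
    using Q_nonneg kappa(2) by (cases "Q = 0") simp_all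
  then show ?thesis by (simp add: Q_def d_def)
qed

text \<open>The exit vector only has to be a unit vector orthogonal to the other outputs of the dilation,
  so its \<open>F\<close>-component \<open>v\<close> can be prescribed as long as it is small; the part in the first layer
  repairs the orthogonality to \<open>phi ` F\<close>, and \<open>f (N, 0)\<close> fills up the norm.\<close>

definition correction :: "'a \<Rightarrow> nat \<Rightarrow> complex" where
  "correction v i = - cinner v (C (u i))"

definition exit_candidate :: "real \<Rightarrow> 'a \<Rightarrow> 'a" where
  "exit_candidate s v = v + row 1 (correction v) + s *\<^sub>R f (N, 0)"

context
  assumes W_pos: "0 < W"
begin

lemma exit_rows: "1 \<in> {1..N}" "N \<in> {1..N}" "(N, 0) \<in> {1..N} \<times> {..<W}"
  using N_ge_2 W_pos by auto

lemma cinner_exit_candidate_F: "y \<in> F \<Longrightarrow> cinner (exit_candidate s v) y = cinner v y"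
  using exit_rows
  by (simp add: exit_candidate_def cinner.add_left cinner.scaleR_left cinner_row_F f_orth_F)

lemma cinner_exit_candidate_self:
  assumes "v \<in> F"
  shows "cinner (exit_candidate s v) (exit_candidate s v)
    = of_real ((norm v)\<^sup>2 + (\<Sum>i<W. (cmod (correction v i))\<^sup>2) + s\<^sup>2)"
proof -
  have "cinner (f (N, 0)) (f (N, 0)) = 1"
    using f_orthonormal exit_rows unfolding orthonormal_def by simp
  moreover have "cinner (row 1 (correction v)) (row 1 (correction v))
      = of_real (\<Sum>i<W. (cmod (correction v i))\<^sup>2)"
    unfolding of_real_sum complex_norm_square using exit_rows by (simp add: cinner_row_row)
  ultimately have "cinner (exit_candidate s v) (exit_candidate s v)
      = cinner v v + of_real (\<Sum>i<W. (cmod (correction v i))\<^sup>2) + of_real (s\<^sup>2)"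
    using exit_rows N_ge_2 assms
    by (simp add: exit_candidate_def cinner.add_left cinner.add_right cinner.scaleR_left
        cinner.scaleR_right cinner_row_F cinner_F_row F_orth_f f_orth_F cinner_row_f cinner_f_row
        power2_eq_square)
  then show ?thesis
    by (simp only: cinner_self[of v] of_real_add)
qed

lemma phi_orth_exit_candidate:
  assumes a: "a \<in> F" and v: "v \<in> F"
  shows "cinner (phi a) (exit_candidate s v) = 0"
proof -
  have a_u: "a = (\<Sum>i<W. defect_form C a (u i) *\<^sub>C u i)"
    using F_in_u[OF a] by (simp add: orthospan_def transfer_map_def)
  have "cinner (layer 1 a) (row 1 (correction v))
      = - (\<Sum>i<W. defect_form C a (u i) * cinner (C (u i)) v)"
    using exit_rows
    by (simp add: layer_def cinner_row_row correction_def sum_negf flip: cinner.conj_sym)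
  also have "\<dots> = - cinner (C a) v"
    using arg_cong[OF a_u, of C] C_linear
    by (simp add: clinear_sum clinear_def cinner.sum_left cinner.scaleC_left)
  finally show ?thesis
    using exit_rows N_ge_2 a v phi_orth_f[of N 0 a] W_pos
    by (simp add: exit_candidate_def phi_def layer_def cinner.add_left cinner.add_right
        cinner.scaleR_right C_range cinner_row_F cinner_F_row)
qed

lemma f_orth_exit_candidate:
  assumes p: "p \<in> {2..N} \<times> {..<W} - {(N, 0)}" and v: "v \<in> F"
  shows "cinner (f p) (exit_candidate s v) = 0"
proof -
  obtain l j where lj: "p = (l, j)" by (cases p)
  have "p \<in> {1..N} \<times> {..<W}" "p \<noteq> (N, 0)" using p by auto
  then have "cinner (f p) (f (N, 0)) = 0"
    using f_orthonormal[unfolded orthonormal_def, rule_format, OF _ exit_rows(3)] by simp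
  then show ?thesis
    using v exit_rows p unfolding lj
    by (simp add: exit_candidate_def cinner.add_right cinner.scaleR_right f_orth_F cinner_f_row)
qed

lemma exit_vector_exists:
  assumes kappa: "\<And>h. \<kappa> * (norm h)\<^sup>2 \<le> Re (defect_form C h h)" "0 < \<kappa>"
    and C_contr: "\<And>h. norm (C h) \<le> norm h"
    and v: "v \<in> F" and small: "(1 + \<kappa>) * (norm v)\<^sup>2 \<le> \<kappa>"
  obtains w where "exit_vector w" "\<And>y. y \<in> F \<Longrightarrow> cinner w y = cinner v y"
proof -
  define Q where "Q = (\<Sum>i<W. (cmod (correction v i))\<^sup>2)"
  have "\<kappa> * Q \<le> (norm v)\<^sup>2"
    using defect_coefficients_bound[OF kappa C_contr, of v] by (simp add: Q_def correction_def)
  then have "\<kappa> * ((norm v)\<^sup>2 + Q) \<le> \<kappa> * 1"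
    using small by (simp add: algebra_simps)
  then have "(norm v)\<^sup>2 + Q \<le> 1"
    using kappa(2) by simp
  then have "cinner (exit_candidate (sqrt (1 - (norm v)\<^sup>2 - Q)) v)
      (exit_candidate (sqrt (1 - (norm v)\<^sup>2 - Q)) v) = 1"
    using v by (simp add: cinner_exit_candidate_self Q_def)
  then show thesis
    using v phi_orth_exit_candidate f_orth_exit_candidate cinner_exit_candidate_F
    by (intro that[of "exit_candidate (sqrt (1 - (norm v)\<^sup>2 - Q)) v"]) (simp_all add: exit_vector_def)
qed

end

end

lemma rescaled_error_bound:
  fixes d :: "'a::real_normed_vector"
  assumes "0 < \<beta>" "0 < \<kappa>" "\<kappa> \<le> 1" "\<kappa> * (norm x)\<^sup>2 \<le> \<beta>\<^sup>2" "norm d \<le> \<kappa> * norm x / 2"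
  shows "(1 + \<kappa>) * (norm ((1 / \<beta>) *\<^sub>R d))\<^sup>2 \<le> \<kappa>"
proof -
  have "(norm ((1 / \<beta>) *\<^sub>R d))\<^sup>2 * \<beta>\<^sup>2 = (norm d)\<^sup>2"
    using assms(1) by (simp add: power_mult_distrib[symmetric])
  also have "\<dots> \<le> (\<kappa> * norm x / 2)\<^sup>2"
    using assms(5) by (intro power_mono) simp_all
  also have "\<dots> = \<kappa> / 4 * (\<kappa> * (norm x)\<^sup>2)"
    by (simp add: power2_eq_square)
  also have "\<dots> \<le> \<kappa> / 4 * \<beta>\<^sup>2"
    using assms(2,4) by (intro mult_left_mono) auto
  finally have "(norm ((1 / \<beta>) *\<^sub>R d))\<^sup>2 \<le> \<kappa> / 4"
    using assms(1) by (simp add: mult_le_cancel_right_pos)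
  moreover have "(1 + \<kappa>) * (norm ((1 / \<beta>) *\<^sub>R d))\<^sup>2 \<le> 2 * (norm ((1 / \<beta>) *\<^sub>R d))\<^sup>2"
    using assms(3) by (intro mult_right_mono) auto
  ultimately show ?thesis
    using assms(2) by linarith
qed

theorem contraction_dilation:
  fixes m :: nat and e :: "nat \<Rightarrow> 'a::complex_inner" and C :: "'a \<Rightarrow> 'a"
  defines "F \<equiv> orthospan cinner {..<m} e"
  assumes infinite_dim: "\<not> (\<exists>B::'a set. finite B \<and> cspan B = UNIV)"
    and e: "orthonormal cinner {..<m} e"
    and C: "clinear C" "\<And>h. C h \<in> F" "\<And>h. norm (C h) \<le> q * norm h" "0 \<le> q" "q < 1"
    and x: "x \<in> F" "x \<noteq> 0" and w: "w \<in> F" and N: "2 \<le> N"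
    and close: "norm (w - (C ^^ N) x) \<le> (1 - q\<^sup>2) * norm x / 2"
  shows "\<exists>V. clinear V \<and> finite_rank V \<and> (\<forall>h. norm (V h) \<le> norm h)
    \<and> (\<forall>a\<in>F. \<forall>y\<in>F. cinner (V a) y = cinner (C a) y)
    \<and> (\<forall>y\<in>F. cinner ((V ^^ N) x) y = cinner w y)
    \<and> (\<forall>l<N. norm ((V ^^ Suc l) x) = norm ((V ^^ l) x))"
proof -
  define \<kappa> where "\<kappa> = 1 - q\<^sup>2"
  have \<kappa>: "0 < \<kappa>" "\<kappa> \<le> 1" "\<And>h. \<kappa> * (norm h)\<^sup>2 \<le> Re (defect_form C h h)"
    using C(4,5) defect_form_lower_bound[OF C(3,4)] by (simp_all add: \<kappa>_def power_less_one_iff)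
  interpret defect: positive_hermitian_form "defect_form C"
    by (rule positive_defect_form[OF C(1,3-5)])
  define \<beta> where "\<beta> = sqrt (Re (defect_form C x x))"
  have \<beta>: "0 < \<beta>" "\<kappa> * (norm x)\<^sup>2 \<le> \<beta>\<^sup>2"
    using \<kappa>(3)[of x] defect.positive[OF x(2)] by (simp_all add: \<beta>_def)
  obtain W :: nat and u where u: "0 < W" "defect_form C x (u 0) = \<beta>"
      "orthonormal (defect_form C) {..<W} u" "set (map e [0..<m]) \<subseteq> orthospan (defect_form C) {..<W} u"
    using defect.gram_schmidt_through[OF x(2), of "map e [0..<m]"] unfolding \<beta>_def by blast
  obtain f where f: "orthonormal cinner ({1..N} \<times> {..<W}) f"
      "\<And>p i. p \<in> {1..N} \<times> {..<W} \<Longrightarrow> i < m \<Longrightarrow> cinner (f p) (e i) = 0"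
    using orthonormal_fresh_family[OF infinite_dim e, of "{1..N} \<times> {..<W}"] by blast
  interpret dilation_frame m e C W u N f
    using e C u f N by unfold_locales (auto simp: F_def)
  define v where "v = (1 / \<beta>) *\<^sub>R (w - (C ^^ N) x)"
  have v: "v \<in> F"
    unfolding v_def F_def using w x C_power_in_F
    by (intro cinner.orthospan_scaleR cinner.orthospan_diff) (auto simp: F_def)
  have "(1 + \<kappa>) * (norm v)\<^sup>2 \<le> \<kappa>"
    unfolding v_def using \<beta> \<kappa>(1,2) close by (intro rescaled_error_bound) (simp_all add: \<kappa>_def)
  moreover have "norm (C h) \<le> norm h" for h
    using C(3)[of h] C(5) mult_right_mono[of q 1 "norm h"] by simp
  ultimately obtain w' where w': "exit_vector w'" "\<And>y. y \<in> F \<Longrightarrow> cinner w' y = cinner v y"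
    using exit_vector_exists[OF u(1) \<kappa>(3,1) _ v[unfolded F_def]] unfolding F_def by blast
  have "\<forall>y\<in>F. cinner ((dilation w' ^^ N) x) y = cinner w y"
    using x(1) w' \<beta>(1) by (simp add: dilation_power_N[OF u(1)] u(2) v_def cinner.scaleR_left
        cinner.diff_left F_def flip: of_real_mult)
  moreover have "\<forall>l<N. norm ((dilation w' ^^ Suc l) x) = norm ((dilation w' ^^ l) x)"
    using dilation_isometric_on_orbit[OF w'(1) x(1)[unfolded F_def]] by simp
  ultimately show ?thesis
    using dilation_clinear[of w'] dilation_finite_rank[of w'] norm_dilation_le[OF w'(1)] cinner_dilation_F
    by (intro exI[of _ "dilation w'"]) (simp add: F_def)
qed

section \<open>Compressing \<open>T\<close> to a finite-dimensional subspace\<close>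

lemma compression:
  fixes T :: "'a::complex_inner \<Rightarrow> 'a" and e :: "nat \<Rightarrow> 'a"
  assumes e: "orthonormal cinner {..<m} e"
    and T: "clinear T" "\<And>h. norm (T h) \<le> R * norm h" and c: "0 \<le> c"
  defines "C \<equiv> \<lambda>h. c *\<^sub>R transfer_map cinner {..<m} e e (T h)"
  shows "clinear C" "C h \<in> orthospan cinner {..<m} e" "norm (C h) \<le> c * R * norm h"
    and "y \<in> orthospan cinner {..<m} e \<Longrightarrow> cinner (C h) y = c * cinner (T h) y"
proof -
  show "clinear C"
    using T(1) cinner.transfer_clinear[of "{..<m}" e e]
    by (simp add: C_def clinear_def scaleR_add_right scaleR_scaleC_commute)
  show "C h \<in> orthospan cinner {..<m} e"
    unfolding C_def transfer_map_def using e by (intro cinner.orthospan_scaleR cinner.orthospan_lincomb) auto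
  have "norm (C h) \<le> c * norm (T h)"
    using norm_transfer_le[OF _ e e, of "T h"] c by (simp add: C_def mult_left_mono)
  also have "\<dots> \<le> c * (R * norm h)"
    using T(2) c by (rule mult_left_mono)
  finally show "norm (C h) \<le> c * R * norm h" by (simp add: mult.assoc)
  show "y \<in> orthospan cinner {..<m} e \<Longrightarrow> cinner (C h) y = c * cinner (T h) y"
    by (simp add: C_def cinner.scaleR_left cinner.transfer_orthospan[OF _ e])
qed

lemma norm_funpow_le:
  fixes C :: "'a::real_normed_vector \<Rightarrow> 'a"
  assumes "\<And>h. norm (C h) \<le> q * norm h" "0 \<le> q"
  shows "norm ((C ^^ k) h) \<le> q ^ k * norm h"
proof (induction k)
  case (Suc k)
  have "norm ((C ^^ Suc k) h) \<le> q * norm ((C ^^ k) h)" using assms(1)[of "(C ^^ k) h"] by simp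
  also have "\<dots> \<le> q * (q ^ k * norm h)" using Suc assms(2) by (rule mult_left_mono)
  finally show ?case by (simp add: mult.assoc)
qed simp

lemma finite_rank_scaleR:
  assumes "finite_rank V" shows "finite_rank (\<lambda>h. r *\<^sub>R V h)"
proof -
  obtain B where B: "finite B" "range V \<subseteq> cspan B"
    using assms by (auto simp: finite_rank_def)
  have "r *\<^sub>R v \<in> cspan B" if "v \<in> cspan B" for v
  proof -
    obtain A c where "finite A" "A \<subseteq> B" "v = (\<Sum>a\<in>A. c a *\<^sub>C a)"
      using \<open>v \<in> cspan B\<close> by (auto simp: cspan_def)
    moreover have "r *\<^sub>R (\<Sum>a\<in>A. c a *\<^sub>C a) = (\<Sum>a\<in>A. (of_real r * c a) *\<^sub>C a)"
      by (simp add: scaleR_scaleC scaleC_sum_right scaleC_scaleC)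
    ultimately show ?thesis
      unfolding cspan_def by (intro CollectI exI[of _ A] exI[of _ "\<lambda>a. of_real r * c a"]) simp
  qed
  then show ?thesis
    using B unfolding finite_rank_def by (intro exI[of _ B]) auto
qed

lemma clinear_scaleR: "clinear V \<Longrightarrow> V (r *\<^sub>R x) = r *\<^sub>R V x"
  by (simp add: clinear_def scaleR_scaleC)

lemma funpow_scaleR:
  fixes V :: "'a::complex_vector \<Rightarrow> 'a"
  assumes "clinear V" shows "((\<lambda>h. R *\<^sub>R V h) ^^ k) h = R ^ k *\<^sub>R (V ^^ k) h"
  by (induction k) (simp_all add: clinear_scaleR[OF assms])

lemma scaled_contraction_blinfun:
  assumes V: "clinear V" "\<And>h. norm (V h) \<le> norm h" and R: "0 \<le> R"
  shows "blinfun_apply (Blinfun (\<lambda>h. R *\<^sub>R V h)) = (\<lambda>h. R *\<^sub>R V h)"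
    and "norm (Blinfun (\<lambda>h. R *\<^sub>R V h)) \<le> R"
proof -
  have "bounded_linear (\<lambda>h. R *\<^sub>R V h)"
  proof (rule bounded_linear_intro[where K = R])
    fix a b :: 'a and r :: real
    show "R *\<^sub>R V (a + b) = R *\<^sub>R V a + R *\<^sub>R V b"
      using V(1) by (simp add: clinear_def scaleR_add_right)
    show "R *\<^sub>R V (r *\<^sub>R a) = r *\<^sub>R (R *\<^sub>R V a)"
      by (simp add: clinear_scaleR[OF V(1)])
    show "norm (R *\<^sub>R V a) \<le> norm a * R"
      using V(2)[of a] R by (simp add: mult_left_mono mult.commute)
  qed
  then show apply_eq: "blinfun_apply (Blinfun (\<lambda>h. R *\<^sub>R V h)) = (\<lambda>h. R *\<^sub>R V h)"
    by (rule bounded_linear_Blinfun_apply)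
  show "norm (Blinfun (\<lambda>h. R *\<^sub>R V h)) \<le> R"
    using V(2) R by (intro norm_blinfun_bound) (simp_all add: apply_eq mult_left_mono)
qed

lemma power_target_close:
  fixes C :: "'a::real_normed_vector \<Rightarrow> 'a"
  assumes "\<And>h. norm (C h) \<le> q * norm h" "0 \<le> q" "0 < R"
    and "norm z / R ^ N \<le> \<kappa> * norm x / 4" "q ^ N \<le> \<kappa> / 4"
  shows "norm ((1 / R ^ N) *\<^sub>R z - (C ^^ N) x) \<le> \<kappa> * norm x / 2"
proof -
  have "norm ((1 / R ^ N) *\<^sub>R z - (C ^^ N) x) \<le> norm z / R ^ N + q ^ N * norm x"
    using norm_triangle_ineq4[of "(1 / R ^ N) *\<^sub>R z" "(C ^^ N) x"] norm_funpow_le[OF assms(1,2), of N x]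
      assms(3) by simp
  moreover have "q ^ N * norm x \<le> \<kappa> * norm x / 4"
    using mult_right_mono[OF assms(5) norm_ge_zero[of x]] by simp
  ultimately show ?thesis
    using assms(4) by linarith
qed

lemma scaled_compression_error:
  assumes "0 < R" "cinner (V a) y = of_real ((1 - \<delta>) / R) * cinner (T a) y"
    and "norm (T a) \<le> R" "norm y = 1" "0 \<le> \<delta>"
  shows "cmod (cinner (R *\<^sub>R V a - T a) y) \<le> \<delta> * R"
proof -
  have "cinner (R *\<^sub>R V a - T a) y = (of_real (R * ((1 - \<delta>) / R)) - 1) * cinner (T a) y"
    using assms(2) by (simp add: cinner.diff_left cinner.scaleR_left algebra_simps)
  also have "of_real (R * ((1 - \<delta>) / R)) - 1 = - (of_real \<delta> :: complex)"
    using assms(1) by simp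
  finally have "cmod (cinner (R *\<^sub>R V a - T a) y) = \<delta> * cmod (cinner (T a) y)"
    using assms(5) by (simp add: norm_mult)
  also have "\<dots> \<le> \<delta> * R"
    using cinner_cauchy_schwarz[of "T a" y] assms(3-5) by (intro mult_left_mono) auto
  finally show ?thesis .
qed

lemma finite_rank_perturbation_with_orbit:
  fixes T :: "'a::complex_inner \<Rightarrow>\<^sub>L 'a" and x z :: 'a and xs ys :: "nat \<Rightarrow> 'a"
  assumes infinite_dim: "\<not> (\<exists>B::'a set. finite B \<and> cspan B = UNIV)"
    and xs_ys: "\<forall>j<n. norm (xs j) = 1 \<and> norm (ys j) = 1"
    and R: "R > 1" and T: "clinear (blinfun_apply T)" "norm T \<le> R"
    and x: "x \<noteq> 0" and \<delta>: "0 < \<delta>" "\<delta> \<le> 1 / 2" "\<delta> * R < \<epsilon>"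
    and N: "2 \<le> N" "norm z / R ^ N \<le> (1 - (1 - \<delta>)\<^sup>2) * norm x / 4" "(1 - \<delta>) ^ N \<le> (1 - (1 - \<delta>)\<^sup>2) / 4"
  shows "\<exists>S::'a \<Rightarrow>\<^sub>L 'a. clinear (blinfun_apply S) \<and> finite_rank (blinfun_apply S) \<and> norm S \<le> R \<and>
    (\<forall>j<n. cmod (cinner (blinfun_apply (S - T) (xs j)) (ys j)) < \<epsilon> \<and>
           cinner (z - (blinfun_apply S ^^ N) x) (ys j) = 0) \<and>
    (\<forall>l<N. norm ((blinfun_apply S ^^ (l + 1)) x) = R * norm ((blinfun_apply S ^^ l) x))"
proof -
  from finite_orthonormal_basis[of "x # z # map xs [0..<n] @ map ys [0..<n]"]
  obtain m :: nat and e where e: "orthonormal cinner {..<m} e"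
    and span: "set (x # z # map xs [0..<n] @ map ys [0..<n]) \<subseteq> orthospan cinner {..<m} e"
    by (elim exE conjE) (rule that)
  define F where "F = orthospan cinner {..<m} e"
  have xF: "x \<in> F"
    using span by (simp add: F_def)
  have Tb: "norm (blinfun_apply T h) \<le> R * norm h" for h
    using norm_blinfun[of T h] T(2) by (meson mult_right_mono norm_ge_zero order_trans)
  define C where "C h = ((1 - \<delta>) / R) *\<^sub>R transfer_map cinner {..<m} e e (blinfun_apply T h)" for h
  have C: "clinear C" "\<And>h. C h \<in> F" "\<And>h. norm (C h) \<le> (1 - \<delta>) * norm h"
      "\<And>h y. y \<in> F \<Longrightarrow> cinner (C h) y = of_real ((1 - \<delta>) / R) * cinner (blinfun_apply T h) y"
    using compression[OF e T(1) Tb, of "(1 - \<delta>) / R"] R \<delta>(2) unfolding C_def[abs_def] F_def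
    by auto
  define w where "w = (1 / R ^ N) *\<^sub>R z"
  have "w \<in> F" using span by (auto simp: w_def F_def intro: cinner.orthospan_scaleR)
  have "norm (w - (C ^^ N) x) \<le> (1 - (1 - \<delta>)\<^sup>2) * norm x / 2"
    unfolding w_def using C(3) \<delta>(2) R N(2,3) by (intro power_target_close) auto
  then obtain V where V: "clinear V" "finite_rank V" "\<And>h. norm (V h) \<le> norm h"
      "\<And>a y. a \<in> F \<Longrightarrow> y \<in> F \<Longrightarrow> cinner (V a) y = cinner (C a) y"
      "\<And>y. y \<in> F \<Longrightarrow> cinner ((V ^^ N) x) y = cinner w y"
      "\<And>l. l < N \<Longrightarrow> norm ((V ^^ Suc l) x) = norm ((V ^^ l) x)"
    using contraction_dilation[OF infinite_dim e C(1,2)[unfolded F_def] C(3) _ _ xF[unfolded F_def] x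
        \<open>w \<in> F\<close>[unfolded F_def] N(1)] \<delta> unfolding F_def by auto
  define S where "S = Blinfun (\<lambda>h. R *\<^sub>R V h)"
  have S: "blinfun_apply S = (\<lambda>h. R *\<^sub>R V h)" "norm S \<le> R"
    using scaled_contraction_blinfun[OF V(1,3)] R unfolding S_def by simp_all
  have S_power: "(blinfun_apply S ^^ k) h = R ^ k *\<^sub>R (V ^^ k) h" for k h
    using funpow_scaleR[OF V(1)] by (simp add: S(1))
  have weak: "cmod (cinner (blinfun_apply (S - T) (xs j)) (ys j)) < \<epsilon>" if "j < n" for j
  proof -
    have "xs j \<in> F" "ys j \<in> F" using span that by (auto simp: F_def)
    then have "cmod (cinner (R *\<^sub>R V (xs j) - blinfun_apply T (xs j)) (ys j)) \<le> \<delta> * R"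
      using Tb[of "xs j"] xs_ys that \<delta>(1) R V(4) C(4) by (intro scaled_compression_error) auto
    then show ?thesis using \<delta>(3) by (simp add: blinfun.diff_left S(1))
  qed
  have hit: "cinner (z - (blinfun_apply S ^^ N) x) (ys j) = 0" if "j < n" for j
  proof -
    have "ys j \<in> F" using span that by (auto simp: F_def)
    then show ?thesis
      using V(5) R by (simp add: S_power cinner.diff_left cinner.scaleR_left w_def)
  qed
  have growth: "norm ((blinfun_apply S ^^ (l + 1)) x) = R * norm ((blinfun_apply S ^^ l) x)"
    if "l < N" for l
  proof -
    have "norm ((blinfun_apply S ^^ (l + 1)) x) = R ^ (l + 1) * norm ((V ^^ Suc l) x)"
      "norm ((blinfun_apply S ^^ l) x) = R ^ l * norm ((V ^^ l) x)"
      using R by (simp_all only: S_power) simp_all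
    then show ?thesis using V(6)[OF that] by simp
  qed
  have "clinear (blinfun_apply S)" "finite_rank (blinfun_apply S)"
    using V(1) finite_rank_scaleR[OF V(2), of R]
    by (simp_all add: S(1) clinear_def scaleR_add_right scaleR_scaleC_commute)
  then show ?thesis
    using S(2) weak hit growth by (intro exI[of _ S]) auto
qed

lemma exists_power_bounds:
  fixes R q b c d :: real
  assumes "R > 1" "0 \<le> q" "q < 1" "c > 0" "d > 0"
  shows "\<exists>N. 2 \<le> N \<and> b / R ^ N \<le> c \<and> q ^ N \<le> d"
proof -
  have "(\<lambda>N. b * inverse R ^ N) \<longlonglongrightarrow> b * 0"
    using assms by (intro tendsto_mult tendsto_const LIMSEQ_realpow_zero) (auto simp: inverse_less_1_iff)
  then have "eventually (\<lambda>N. b * inverse R ^ N < c) sequentially"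
    using assms(4) by (simp add: order_tendstoD(2))
  moreover have "eventually (\<lambda>N. q ^ N < d) sequentially"
    using assms(2,3,5) by (intro order_tendstoD(2)[OF LIMSEQ_realpow_zero]) auto
  ultimately have "eventually (\<lambda>N. 2 \<le> N \<and> b * inverse R ^ N < c \<and> q ^ N < d) sequentially"
    by (auto intro: eventually_conj eventually_ge_at_top)
  then obtain N where "2 \<le> N" "b * inverse R ^ N < c" "q ^ N < d"
    by (auto simp: eventually_sequentially)
  then show ?thesis
    by (intro exI[of _ N]) (auto simp: divide_inverse power_inverse)
qed

theorem lemma8:
  assumes separable: "\<exists>D::'a::{complex_inner, complete_space} set. countable D \<and> closure D = UNIV"
    and infinite_dim: "\<not> (\<exists>B::'a set. finite B \<and> cspan B = UNIV)"
  shows "\<exists>Nf :: real \<Rightarrow> real \<Rightarrow> real \<Rightarrow> real \<Rightarrow> nat.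
    \<forall>(n::nat) (xs::nat \<Rightarrow> 'a) (ys::nat \<Rightarrow> 'a) (R::real) (T::'a \<Rightarrow>\<^sub>L 'a) (x::'a) (z::'a) (\<epsilon>::real).
      (\<forall>j<n. norm (xs j) = 1 \<and> norm (ys j) = 1) \<and> R > 1 \<and>
      clinear (blinfun_apply T) \<and> norm T \<le> R \<and> x \<noteq> 0 \<and> \<epsilon> > 0 \<longrightarrow>
      (let N = Nf R \<epsilon> (norm x) (norm z) in
       \<exists>S::'a \<Rightarrow>\<^sub>L 'a. clinear (blinfun_apply S) \<and> finite_rank (blinfun_apply S) \<and> norm S \<le> R \<and>
         (\<forall>j<n. cmod (cinner (blinfun_apply (S - T) (xs j)) (ys j)) < \<epsilon> \<and>
                cinner (z - (blinfun_apply S ^^ N) x) (ys j) = 0) \<and>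
         (\<forall>l<N. norm ((blinfun_apply S ^^ (l + 1)) x) = R * norm ((blinfun_apply S ^^ l) x)))"
proof -
  define \<delta> where "\<delta> R \<epsilon> = min (1 / 2) (\<epsilon> / (2 * R))" for R \<epsilon> :: real
  define \<kappa> where "\<kappa> R \<epsilon> = 1 - (1 - \<delta> R \<epsilon>)\<^sup>2" for R \<epsilon>
  define Nf where "Nf R \<epsilon> a b = (SOME N. 2 \<le> N \<and> b / R ^ N \<le> \<kappa> R \<epsilon> * a / 4
    \<and> (1 - \<delta> R \<epsilon>) ^ N \<le> \<kappa> R \<epsilon> / 4)" for R \<epsilon> a b
  show ?thesis
  proof (intro exI[of _ Nf] allI impI, goal_cases)
    case (1 n xs ys R T x z \<epsilon>)
    then have \<delta>: "0 < \<delta> R \<epsilon>" "\<delta> R \<epsilon> \<le> 1 / 2" "\<delta> R \<epsilon> * R < \<epsilon>"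
      by (auto simp: \<delta>_def min_def field_simps)
    then have "0 < \<kappa> R \<epsilon>"
      by (simp add: \<kappa>_def power2_eq_square algebra_simps)
    then have "\<exists>N. 2 \<le> N \<and> norm z / R ^ N \<le> \<kappa> R \<epsilon> * norm x / 4 \<and> (1 - \<delta> R \<epsilon>) ^ N \<le> \<kappa> R \<epsilon> / 4"
      using 1 \<delta> by (intro exists_power_bounds) auto
    then have "2 \<le> Nf R \<epsilon> (norm x) (norm z) \<and> norm z / R ^ Nf R \<epsilon> (norm x) (norm z) \<le> \<kappa> R \<epsilon> * norm x / 4
        \<and> (1 - \<delta> R \<epsilon>) ^ Nf R \<epsilon> (norm x) (norm z) \<le> \<kappa> R \<epsilon> / 4"
      unfolding Nf_def by (rule someI_ex)
    then show ?case
      unfolding Let_def \<kappa>_def using 1 \<delta>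
      by (intro finite_rank_perturbation_with_orbit[OF infinite_dim]) auto
  qed
qed

end
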